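(* Let $\Xi$ be an orthogonally invariant FQ operation with circular-basis coefficients $\tilde p^{[s]}_{i_1,\dots,i_r}$ ($s=0$ scalar, $s\in\{1,2\}$ vectorial components, $s=12$ pseudoscalar). For a word $w$ over $\{1,2\}$ let $\mathrm{red}\,w$ be its shortest reduction under the rules $11=\lambda$, $22=\lambda$ ($\lambda$ the empty word). Let $\iota=(i_1,\dots,i_r)$ with all $i_j\in\{1,2\}$. If $\mathrm{red}\,\iota\notin\{\lambda,(2)\}$, and moreover either $s\in\{0,12\}$ or $\mathrm{red}\,\iota\notin\{(1),(2,1)\}$, then $\tilde p^{[s]}_{i_1,\dots,i_r}=0$.
   Context: Setting. $(Q_1,Q_2)$ is a Clifford system: $Q_1^2=Q_2^2=-1$, $Q_1Q_2=-Q_2Q_1$. $R_1,R_2$ are formal noncommuting infinitesimal variables; one works in the real algebra generated by $Q_1,Q_2,R_1,R_2$ (free apart from the Clifford relations), completed with respect to total degree in $R_1,R_2$, or in extensions of it by further formal infinitesimal elements. Put $A_i=Q_i+R_i$. For $Q$ with $Q^2=-1$ and any $X$ put $X^0_Q=\frac12(X+Q^{-1}XQ)$, $X^1_Q=\frac12(X-Q^{-1}XQ)$. The split variables are $r_1,\dots,r_8$: for $j\in\{1,2\}$, $\iota_1,\iota_2\in\{0,1\}$, $r_{4(j-1)+2\iota_1+\iota_2+1}=((R_jQ_j^{-1})^{\iota_1}_{Q_1})^{\iota_2}_{Q_2}$. An FQ operation around $(Q_1,Q_2)$ is given by formal real noncommutative power series in eight variables: scalar $\Xi(A_1,A_2)=f_0(r_1,\dots,r_8)$,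 vectorial $\Xi(A_1,A_2)=(f_1(r)Q_1,f_2(r)Q_2)$, pseudoscalar $\Xi(A_1,A_2)=f_{12}(r)Q_1Q_2$; the operation is identified with this family of series. The same series can be evaluated relative to any other Clifford system $(Q_1',Q_2')$ at $(A_1',A_2')$ with $A'_i-Q'_i$ infinitesimal, by forming the split variables of $A_i'-Q_i'$ relative to $(Q'_1,Q'_2)$ and multiplying by $Q'_s$. Mixed basis: $\hat r_1=\frac12(r_2-r_7)$, $\hat r_2=\frac12(r_2+r_7)$, $\hat r_3=\frac12(r_1+r_5)$, $\hat r_4=\frac12(r_1-r_5)$, $\hat r_5=\frac12(r_4-r_8)$, $\hat r_6=\frac12(r_4+r_8)$, $\hat r_7=\frac12(r_3+r_6)$, $\hat r_8=\frac12(r_3-r_6)$. Circular basis: $\tilde r_i=\hat r_i$ for $i\notin\{4,5\}$, $\tilde r_4=\hat r_4+\hat r_5$, $\tilde r_5=\hat r_4-\hat r_5$. Rewriting $f_s$ as a power series in $\tilde r_1,\dots,\tilde r_8$, $\tilde p^{[s]}_{i_1,\dots,i_r}$ is the coefficient of $\tilde r_{i_1}\cdots\tilde r_{i_r}$. Orthogonal invariance: let $t$ be a central formal variable with $t^2=0$ and $\mathrm{Rot}_t(B_1,B_2)=(B_1+tB_2,\,B_2-tB_1)$. A (pseudo)scalar $\Xi$ is orthogonally invariant if $\Xi_{(Q_1,Q_2)}(A_1,A_2)=\Xi_{\mathrm{Rot}_t(Q_1,Q_2)}(\mathrm{Rot}_t(A_1,A_2))$; a vectorial $\Xi$ is orthogonally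 invariant if $\mathrm{Rot}_t(\Xi_{(Q_1,Q_2)}(A_1,A_2))=\Xi_{\mathrm{Rot}_t(Q_1,Q_2)}(\mathrm{Rot}_t(A_1,A_2))$; the subscript indicates the base Clifford system relative to which the series is evaluated. *)

theory Defs
  imports Complex_Main
begin

text \<open>Basis of the Clifford algebra generated by a Clifford system (Q1,Q2):
  E = 1, I = Q1, J = Q2, K = Q1 Q2.  (Q1^2 = Q2^2 = -1, Q1 Q2 = - Q2 Q1.)\<close>
datatype qb = E | I | J | K

fun qmul :: "qb \<Rightarrow> qb \<Rightarrow> real \<times> qb" where
  "qmul E x = (1, x)"
| "qmul x E = (1, x)"
| "qmul I I = (-1, E)"
| "qmul I J = (1, K)"
| "qmul I K = (-1, J)"
| "qmul J I = (-1, K)"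
| "qmul J J = (-1, E)"
| "qmul J K = (1, I)"
| "qmul K I = (1, J)"
| "qmul K J = (-1, I)"
| "qmul K K = (-1, E)"

datatype rlet = RR1 | RR2

text \<open>Normal-form monomials of the algebra generated by Q1,Q2,R1,R2 (free apart from the
  Clifford relations, i.e. the free product of the Clifford algebra with the free algebra
  on R1,R2):  c0 R_{a1} c1 R_{a2} c2 ... R_{an} cn  with ci basis elements of the Clifford
  algebra.  An element of the completion (w.r.t. total degree in R1,R2) is an arbitrary
  real coefficient function on monomials (each degree component is finite dimensional).\<close>
type_synonym mon = "qb \<times> (rlet \<times> qb) list"
type_synonym bel = "mon \<Rightarrow> real"

definition slot :: "mon \<Rightarrow> nat \<Rightarrow> qb" where
  "slot m k = (if k = 0 then fst m else snd (snd m ! (k - 1)))"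

definition pre :: "mon \<Rightarrow> nat \<Rightarrow> qb \<Rightarrow> mon" where
  "pre m k d = (if k = 0 then (d, [])
               else (fst m, take (k - 1) (snd m) @ [(fst (snd m ! (k - 1)), d)]))"

definition suf :: "mon \<Rightarrow> nat \<Rightarrow> qb \<Rightarrow> mon" where
  "suf m k e = (e, drop k (snd m))"

definition bmul :: "bel \<Rightarrow> bel \<Rightarrow> bel" where
  "bmul x y m = (\<Sum>k\<in>{0..length (snd m)}. \<Sum>d\<in>{E,I,J,K}. \<Sum>e\<in>{E,I,J,K}.
      (if snd (qmul d e) = slot m k then fst (qmul d e) * x (pre m k d) * y (suf m k e) else 0))"

definition badd :: "bel \<Rightarrow> bel \<Rightarrow> bel" where "badd x y = (\<lambda>m. x m + y m)"
definition bscale :: "real \<Rightarrow> bel \<Rightarrow> bel" where "bscale c x = (\<lambda>m. c * x m)"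
definition bzero :: bel where "bzero = (\<lambda>m. 0)"
definition bbasis :: "mon \<Rightarrow> bel" where "bbasis m0 = (\<lambda>m. if m = m0 then 1 else 0)"

definition bone :: bel where "bone = bbasis (E, [])"
definition bQ1 :: bel where "bQ1 = bbasis (I, [])"
definition bQ2 :: bel where "bQ2 = bbasis (J, [])"
definition bR1 :: bel where "bR1 = bbasis (E, [(RR1, E)])"
definition bR2 :: bel where "bR2 = bbasis (E, [(RR2, E)])"

text \<open>Extension by a central formal infinitesimal t with t^2 = 0: pairs (a,b) = a + t b.\<close>
type_synonym del = "bel \<times> bel"

definition dadd :: "del \<Rightarrow> del \<Rightarrow> del" where
  "dadd x y = (badd (fst x) (fst y), badd (snd x) (snd y))"
definition dscale :: "real \<Rightarrow> del \<Rightarrow> del" where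
  "dscale c x = (bscale c (fst x), bscale c (snd x))"
definition dneg :: "del \<Rightarrow> del" where "dneg x = dscale (-1) x"
definition dsub :: "del \<Rightarrow> del \<Rightarrow> del" where "dsub x y = dadd x (dneg y)"
definition dmul :: "del \<Rightarrow> del \<Rightarrow> del" where
  "dmul x y = (bmul (fst x) (fst y), badd (bmul (fst x) (snd y)) (bmul (snd x) (fst y)))"
definition dunit :: del where "dunit = (bone, bzero)"
definition demb :: "bel \<Rightarrow> del" where "demb x = (x, bzero)"
definition tt :: del where "tt = (bzero, bone)"

text \<open>A formal real noncommutative power series in the eight variables r1..r8 is a coefficient
  function on words over {1..8} (letters outside {1..8} are ignored).\<close>
type_synonym series = "nat list \<Rightarrow> real"

definition words :: "nat \<Rightarrow> nat list set" where
  "words N = {w. set w \<subseteq> {1..8} \<and> length w \<le> N}"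

fun dprod :: "(nat \<Rightarrow> del) \<Rightarrow> nat list \<Rightarrow> del" where
  "dprod xs [] = dunit"
| "dprod xs (k # w) = dmul (xs k) (dprod xs w)"

text \<open>Substitution of infinitesimal elements (no degree-0 part in the t-free component) into a
  series.  For such arguments a word of length n contributes to the t-free part only in
  R-degree \<ge> n and to the t-part only in R-degree \<ge> n-1, so the coefficient of a
  monomial of R-degree N of the (completed) infinite sum is the displayed finite sum.\<close>
definition deval :: "series \<Rightarrow> (nat \<Rightarrow> del) \<Rightarrow> del" where
  "deval f xs =
     ((\<lambda>m. \<Sum>w\<in>words (length (snd m) + 1). f w * fst (dprod xs w) m),
      (\<lambda>m. \<Sum>w\<in>words (length (snd m) + 1). f w * snd (dprod xs w) m))"

text \<open>X^0_Q = (X + Q^{-1} X Q)/2 and X^1_Q = (X - Q^{-1} X Q)/2; for Q^2 = -1 we have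
  Q^{-1} = -Q.\<close>
definition qpart :: "nat \<Rightarrow> del \<Rightarrow> del \<Rightarrow> del" where
  "qpart i Q X = dscale (1/2)
     (if i = 0 then dadd X (dmul (dmul (dneg Q) X) Q) else dsub X (dmul (dmul (dneg Q) X) Q))"

text \<open>Split variables relative to (Q1,Q2) of (R1,R2):
  r_{4(j-1)+2 i1+i2+1} = ((R_j Q_j^{-1})^{i1}_{Q1})^{i2}_{Q2}, k = 1..8.\<close>
definition splitvar :: "del \<Rightarrow> del \<Rightarrow> del \<Rightarrow> del \<Rightarrow> nat \<Rightarrow> del" where
  "splitvar Q1 Q2 R1 R2 k =
     (let j = (k - 1) div 4; i1 = ((k - 1) mod 4) div 2; i2 = (k - 1) mod 2;
          R = (if j = 0 then R1 else R2); Q = (if j = 0 then Q1 else Q2)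
      in qpart i2 Q2 (qpart i1 Q1 (dmul R (dneg Q))))"

definition scal_eval :: "series \<Rightarrow> del \<Rightarrow> del \<Rightarrow> del \<Rightarrow> del \<Rightarrow> del" where
  "scal_eval f Q1 Q2 A1 A2 = deval f (splitvar Q1 Q2 (dsub A1 Q1) (dsub A2 Q2))"

definition vect_eval :: "series \<Rightarrow> series \<Rightarrow> del \<Rightarrow> del \<Rightarrow> del \<Rightarrow> del \<Rightarrow> del \<times> del" where
  "vect_eval f1 f2 Q1 Q2 A1 A2 =
     (dmul (deval f1 (splitvar Q1 Q2 (dsub A1 Q1) (dsub A2 Q2))) Q1,
      dmul (deval f2 (splitvar Q1 Q2 (dsub A1 Q1) (dsub A2 Q2))) Q2)"

definition pseudo_eval :: "series \<Rightarrow> del \<Rightarrow> del \<Rightarrow> del \<Rightarrow> del \<Rightarrow> del" where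
  "pseudo_eval f Q1 Q2 A1 A2 =
     dmul (deval f (splitvar Q1 Q2 (dsub A1 Q1) (dsub A2 Q2))) (dmul Q1 Q2)"

definition Rot :: "del \<times> del \<Rightarrow> del \<times> del" where
  "Rot B = (dadd (fst B) (dmul tt (snd B)), dsub (snd B) (dmul tt (fst B)))"

definition Q1D :: del where "Q1D = demb bQ1"
definition Q2D :: del where "Q2D = demb bQ2"
definition A1D :: del where "A1D = demb (badd bQ1 bR1)"
definition A2D :: del where "A2D = demb (badd bQ2 bR2)"

definition OI_scalar :: "series \<Rightarrow> bool" where
  "OI_scalar f \<longleftrightarrow>
     scal_eval f Q1D Q2D A1D A2D =
     scal_eval f (fst (Rot (Q1D, Q2D))) (snd (Rot (Q1D, Q2D)))
                 (fst (Rot (A1D, A2D))) (snd (Rot (A1D, A2D)))"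

definition OI_pseudo :: "series \<Rightarrow> bool" where
  "OI_pseudo f \<longleftrightarrow>
     pseudo_eval f Q1D Q2D A1D A2D =
     pseudo_eval f (fst (Rot (Q1D, Q2D))) (snd (Rot (Q1D, Q2D)))
                   (fst (Rot (A1D, A2D))) (snd (Rot (A1D, A2D)))"

definition OI_vect :: "series \<Rightarrow> series \<Rightarrow> bool" where
  "OI_vect f1 f2 \<longleftrightarrow>
     Rot (vect_eval f1 f2 Q1D Q2D A1D A2D) =
     vect_eval f1 f2 (fst (Rot (Q1D, Q2D))) (snd (Rot (Q1D, Q2D)))
                     (fst (Rot (A1D, A2D))) (snd (Rot (A1D, A2D)))"

text \<open>Mixed basis: rhat_l = sum_k Nhat l k * r_k (as in the paper).\<close>
definition Nhat :: "nat \<Rightarrow> nat \<Rightarrow> real" where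
  "Nhat l k =
    (if l = 1 then (if k = 2 then 1/2 else if k = 7 then -1/2 else 0)
     else if l = 2 then (if k = 2 then 1/2 else if k = 7 then 1/2 else 0)
     else if l = 3 then (if k = 1 then 1/2 else if k = 5 then 1/2 else 0)
     else if l = 4 then (if k = 1 then 1/2 else if k = 5 then -1/2 else 0)
     else if l = 5 then (if k = 4 then 1/2 else if k = 8 then -1/2 else 0)
     else if l = 6 then (if k = 4 then 1/2 else if k = 8 then 1/2 else 0)
     else if l = 7 then (if k = 3 then 1/2 else if k = 6 then 1/2 else 0)
     else if l = 8 then (if k = 3 then 1/2 else if k = 6 then -1/2 else 0)
     else 0)"

text \<open>Circular basis: rtilde_l = sum_k Ntil l k * r_k.\<close>
definition Ntil :: "nat \<Rightarrow> nat \<Rightarrow> real" where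
  "Ntil l k = (if l = 4 then Nhat 4 k + Nhat 5 k
               else if l = 5 then Nhat 4 k - Nhat 5 k
               else Nhat l k)"

text \<open>Inverse change of basis: r_k = sum_l Mtil k l * rtilde_l.\<close>
definition Mtil :: "nat \<Rightarrow> nat \<Rightarrow> real" where
  "Mtil k l =
    (if k = 1 then (if l = 3 then 1 else if l = 4 then 1/2 else if l = 5 then 1/2 else 0)
     else if k = 2 then (if l = 1 then 1 else if l = 2 then 1 else 0)
     else if k = 3 then (if l = 7 then 1 else if l = 8 then 1 else 0)
     else if k = 4 then (if l = 4 then 1/2 else if l = 5 then -1/2 else if l = 6 then 1 else 0)
     else if k = 5 then (if l = 3 then 1 else if l = 4 then -1/2 else if l = 5 then -1/2 else 0)
     else if k = 6 then (if l = 7 then 1 else if l = 8 then -1 else 0)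
     else if k = 7 then (if l = 1 then -1 else if l = 2 then 1 else 0)
     else if k = 8 then (if l = 4 then -1/2 else if l = 5 then 1/2 else if l = 6 then 1 else 0)
     else 0)"

lemma Ntil_Mtil_inverse:
  assumes "l \<in> {1..8}" "m \<in> {1..8}"
  shows "(\<Sum>k\<in>{1..8::nat}. Ntil l k * Mtil k m) = (if l = m then 1 else 0)"
proof -
  have S: "{1..8::nat} = {1,2,3,4,5,6,7,8}" by auto
  from assms have "l \<in> {1,2,3,4,5,6,7,8}" "m \<in> {1,2,3,4,5,6,7,8}" by auto
  then show ?thesis
    unfolding S by (auto simp: Ntil_def Nhat_def Mtil_def)
qed

text \<open>Coefficient of rtilde_{i1} ... rtilde_{ir} in f rewritten as a series in the
  rtilde variables (substituting r_k = sum_l Mtil k l rtilde_l).\<close>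
definition ptilde :: "series \<Rightarrow> nat list \<Rightarrow> real" where
  "ptilde f v = (\<Sum>w\<in>{w. set w \<subseteq> {1..8} \<and> length w = length v}.
                   f w * (\<Prod>j<length v. Mtil (w ! j) (v ! j)))"

inductive redstep :: "nat list \<Rightarrow> nat list \<Rightarrow> bool" where
  "a \<in> {1, 2} \<Longrightarrow> redstep (u @ [a, a] @ v) (u @ v)"

definition red :: "nat list \<Rightarrow> nat list" where
  "red w = (SOME v. redstep\<^sup>*\<^sup>* w v \<and> (\<forall>u. redstep\<^sup>*\<^sup>* w u \<longrightarrow> length v \<le> length u))"

end

theory Submission
  imports Defs
begin

text \<open>Orthogonal invariance compares the evaluation at \<open>(Q\<^sub>1, Q\<^sub>2; A\<^sub>1, A\<^sub>2)\<close> with the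
  evaluation at the infinitesimally rotated data. The split variables are of degree one in the
  \<open>R\<^sub>j\<close>, each an average of conjugates of \<open>R\<^sub>j Q\<^sub>j\<^sup>-\<^sup>1\<close> weighted by a character. After the
  rotation they acquire \<open>t\<close>-parts which, in the circular basis, move \<open>rtilde\<^sub>1\<close> by
  \<open>-2 t rtilde\<^sub>1 Q\<^sub>1Q\<^sub>2\<close> and leave \<open>rtilde\<^sub>2\<close> alone, up to directions outside
  \<open>rtilde\<^sub>1, rtilde\<^sub>2\<close>. Peeling \<open>rtilde\<^sub>i\<^sub>1, \<dots>, rtilde\<^sub>i\<^sub>r\<close> off from the left with the dual
  functionals of \<open>rtilde\<^sub>1, rtilde\<^sub>2\<close>, and moving \<open>Q\<^sub>1Q\<^sub>2\<close> across the remaining factors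
  (a sign each), the \<open>t\<close>-part of the rotated evaluation has coefficient \<open>-2 c(\<iota>) p\<close> at
  \<open>Q\<^sub>1Q\<^sub>2\<close>, where \<open>c(\<iota>)\<close> counts the letters \<open>1\<close> of \<open>\<iota>\<close> with alternating signs. Invariance
  gives \<open>c(\<iota>) p = 0\<close> for (pseudo)scalars, and \<open>c(\<iota>) (1 - c(\<iota>)) p = 0\<close> for vectorial
  operations, whose two components the rotation mixes. Finally \<open>c\<close> is unchanged by cancelling
  \<open>11\<close> and \<open>22\<close>, and on alternating words it is \<open>\<lceil>n/2\<rceil>\<close> or \<open>-\<lfloor>n/2\<rfloor>\<close>, so it
  vanishes only on \<open>\<lambda>, (2)\<close> and equals \<open>1\<close> only on \<open>(1), (2,1)\<close>.\<close>

lemma sum_qb: "sum f {E, I, J, K} = f E + f I + f J + f K"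
  by (simp add: add.assoc)

lemma nat_1_8_cases:
  "k \<in> {1..8::nat} \<Longrightarrow> k = 1 \<or> k = 2 \<or> k = 3 \<or> k = 4 \<or> k = 5 \<or> k = 6 \<or> k = 7 \<or> k = 8"
  by auto

lemma bmul_bscale_left: "bmul (bscale c x) y = bscale c (bmul x y)"
proof -
  have "\<And>P a b z. (if P then a * (c * b) * z else 0) = c * (if P then a * b * z else (0::real))"
    by simp
  then show ?thesis unfolding bmul_def bscale_def by (simp only: sum_distrib_left)
qed

lemma bmul_bscale_right: "bmul x (bscale c y) = bscale c (bmul x y)"
proof -
  have "\<And>P a b z. (if P then a * b * (c * z) else 0) = c * (if P then a * b * z else (0::real))"
    by simp
  then show ?thesis unfolding bmul_def bscale_def by (simp only: sum_distrib_left)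
qed

lemma bmul_bzero_left: "bmul bzero y = bzero"
  unfolding bmul_def bzero_def by (simp only: mult_zero_right mult_zero_left if_cancel sum.neutral_const)

lemma bmul_bzero_right: "bmul x bzero = bzero"
  unfolding bmul_def bzero_def by (simp only: mult_zero_right mult_zero_left if_cancel sum.neutral_const)

definition lmul_basis :: "qb \<Rightarrow> bel \<Rightarrow> bel" where
  "lmul_basis d y m = (\<Sum>c\<in>{E, I, J, K}.
     if snd (qmul d c) = fst m then fst (qmul d c) * y (c, snd m) else 0)"

definition rmul_basis :: "qb \<Rightarrow> bel \<Rightarrow> bel" where
  "rmul_basis d x m = (\<Sum>c\<in>{E, I, J, K}.
     if snd (qmul c d) = slot m (length (snd m))
     then fst (qmul c d) * x (pre m (length (snd m)) c) else 0)"

lemma bmul_bbasis_left: "bmul (bbasis (d, [])) y = lmul_basis d y"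
proof
  fix m :: mon
  let ?g = "\<lambda>k. \<Sum>d'\<in>{E, I, J, K}. \<Sum>e\<in>{E, I, J, K}. if snd (qmul d' e) = slot m k
    then fst (qmul d' e) * bbasis (d, []) (pre m k d') * y (suf m k e) else 0"
  have "bmul (bbasis (d, [])) y m = ?g 0 + sum ?g ({0..length (snd m)} - {0})"
    unfolding bmul_def by (subst sum.remove[of _ 0]) auto
  also have "sum ?g ({0..length (snd m)} - {0}) = 0"
    by (rule sum.neutral) (auto simp: bbasis_def pre_def)
  also have "?g 0 = lmul_basis d y m"
    by (cases m; cases d) (simp_all add: slot_def pre_def suf_def bbasis_def lmul_basis_def)
  finally show "bmul (bbasis (d, [])) y m = lmul_basis d y m"
    by simp
qed

lemma bmul_bbasis_right: "bmul x (bbasis (d, [])) = rmul_basis d x"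
proof
  fix m :: mon
  let ?n = "length (snd m)"
  let ?g = "\<lambda>k. \<Sum>d'\<in>{E, I, J, K}. \<Sum>e\<in>{E, I, J, K}. if snd (qmul d' e) = slot m k
    then fst (qmul d' e) * x (pre m k d') * bbasis (d, []) (suf m k e) else 0"
  have "bmul x (bbasis (d, [])) m = ?g ?n + sum ?g ({0..?n} - {?n})"
    unfolding bmul_def by (subst sum.remove[of _ ?n]) auto
  also have "sum ?g ({0..?n} - {?n}) = 0"
    by (rule sum.neutral) (auto simp: bbasis_def suf_def)
  also have "?g ?n = rmul_basis d x m"
    by (cases d) (simp_all add: suf_def bbasis_def rmul_basis_def)
  finally show "bmul x (bbasis (d, [])) m = rmul_basis d x m"
    by simp
qed

lemma rmul_basis_Nil:
  "rmul_basis d x (c, [])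
    = (\<Sum>c'\<in>{E, I, J, K}. if snd (qmul c' d) = c then fst (qmul c' d) * x (c', []) else 0)"
  by (simp add: rmul_basis_def slot_def pre_def)

lemma rmul_basis_single:
  "rmul_basis d x (c0, [(r, c1)])
    = (\<Sum>c'\<in>{E, I, J, K}. if snd (qmul c' d) = c1 then fst (qmul c' d) * x (c0, [(r, c')]) else 0)"
  by (simp add: rmul_basis_def slot_def pre_def)

text \<open>Right multiplication of a monomial of length at least two only sees its tail (\<open>e\<close> is
  arbitrary).\<close>

lemma rmul_basis_Cons:
  assumes "rest \<noteq> []"
  shows "rmul_basis d x (c0, p # rest) = (\<Sum>c'\<in>{E, I, J, K}.
      (if snd (qmul c' d) = slot (e, rest) (length rest) then fst (qmul c' d) else 0)
        * x (c0, p # snd (pre (e, rest) (length rest) c')))"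
  using assms by (cases rest) (simp_all add: rmul_basis_def slot_def pre_def if_distrib)

lemma rmul_basis_nonempty:
  assumes "rest \<noteq> []"
  shows "rmul_basis d x (e, rest) = (\<Sum>c'\<in>{E, I, J, K}.
      (if snd (qmul c' d) = slot (e, rest) (length rest) then fst (qmul c' d) else 0)
        * x (e, snd (pre (e, rest) (length rest) c')))"
  using assms by (cases rest) (simp_all add: rmul_basis_def slot_def pre_def if_distrib)

lemma bmul_bone_left: "bmul bone y = y"
proof
  fix m :: mon
  show "bmul bone y m = y m"
    by (cases m; cases "fst m") (auto simp: bone_def bmul_bbasis_left lmul_basis_def)
qed

lemma rmul_basis_bbasis:
  "rmul_basis d (bbasis (c, [])) = bscale (fst (qmul c d)) (bbasis (snd (qmul c d), []))"
proof
  fix m :: mon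
  obtain c0 l where m: "m = (c0, l)"
    by (cases m)
  show "rmul_basis d (bbasis (c, [])) m = bscale (fst (qmul c d)) (bbasis (snd (qmul c d), [])) m"
    unfolding m by (cases l; cases c; cases d; cases c0)
      (simp_all add: rmul_basis_def slot_def pre_def bscale_def bbasis_def)
qed

section \<open>Elements of degree one\<close>

definition deg1 :: "(qb \<Rightarrow> rlet \<Rightarrow> qb \<Rightarrow> real) \<Rightarrow> bel" where
  "deg1 t m = (case snd m of [(r, c1)] \<Rightarrow> t (fst m) r c1 | _ \<Rightarrow> 0)"

lemma deg1_eq_0: "length (snd m) \<noteq> 1 \<Longrightarrow> deg1 t m = 0"
  by (cases m) (auto simp: deg1_def split: list.split)

lemma deg1_cong: "(\<And>a b c. t a b c = u a b c) \<Longrightarrow> deg1 t = deg1 u"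
  by (rule arg_cong[where f = deg1]) (intro ext)

definition tab_lmul :: "qb \<Rightarrow> (qb \<Rightarrow> rlet \<Rightarrow> qb \<Rightarrow> real) \<Rightarrow> qb \<Rightarrow> rlet \<Rightarrow> qb \<Rightarrow> real" where
  "tab_lmul d t c0 r c1 = (\<Sum>c\<in>{E, I, J, K}. if snd (qmul d c) = c0 then fst (qmul d c) * t c r c1 else 0)"

definition tab_rmul :: "qb \<Rightarrow> (qb \<Rightarrow> rlet \<Rightarrow> qb \<Rightarrow> real) \<Rightarrow> qb \<Rightarrow> rlet \<Rightarrow> qb \<Rightarrow> real" where
  "tab_rmul d t c0 r c1 = (\<Sum>c\<in>{E, I, J, K}. if snd (qmul c d) = c1 then fst (qmul c d) * t c0 r c else 0)"

lemma tab_lmul_eq: "tab_lmul d t c0 r c1 = fst (qmul d (snd (qmul d c0))) * t (snd (qmul d c0)) r c1"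
  by (cases d; cases c0) (simp_all add: tab_lmul_def)

lemma tab_rmul_eq: "tab_rmul d t c0 r c1 = fst (qmul (snd (qmul c1 d)) d) * t c0 r (snd (qmul c1 d))"
  by (cases d; cases c1) (simp_all add: tab_rmul_def)

lemma length_pre: "k \<le> length (snd m) \<Longrightarrow> length (snd (pre m k d)) = k"
  by (auto simp: pre_def)

lemma lmul_basis_deg1: "lmul_basis d (deg1 t) = deg1 (tab_lmul d t)"
proof
  fix m :: mon
  show "lmul_basis d (deg1 t) m = deg1 (tab_lmul d t) m"
    by (cases m; cases "snd m"; cases "tl (snd m)")
      (auto simp: lmul_basis_def deg1_def tab_lmul_def split: list.split)
qed

lemma rmul_basis_deg1: "rmul_basis d (deg1 t) = deg1 (tab_rmul d t)"
proof
  fix m :: mon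
  obtain c0 l where m: "m = (c0, l)"
    by (cases m)
  show "rmul_basis d (deg1 t) m = deg1 (tab_rmul d t) m"
  proof (cases "length l = 1")
    case True
    then obtain r c1 where "l = [(r, c1)]"
      by (cases l) auto
    then show ?thesis
      by (simp add: m rmul_basis_def deg1_def tab_rmul_def slot_def pre_def)
  next
    case False
    then have "deg1 t (pre m (length (snd m)) c) = 0" for c
      by (intro deg1_eq_0) (simp add: m length_pre)
    with False show ?thesis
      by (simp add: m rmul_basis_def deg1_eq_0)
  qed
qed

lemma badd_deg1: "badd (deg1 t) (deg1 u) = deg1 (\<lambda>a b c. t a b c + u a b c)"
  by (rule ext) (simp add: badd_def deg1_def split: list.split)

lemma bscale_deg1: "bscale s (deg1 t) = deg1 (\<lambda>a b c. s * t a b c)"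
  by (rule ext) (simp add: bscale_def deg1_def split: list.split)

lemma bzero_eq_deg1: "bzero = deg1 (\<lambda>a b c. 0)"
  by (rule ext) (simp add: bzero_def deg1_def split: list.split)

lemma bmul_deg1_zero_left: "bmul (deg1 (\<lambda>a b c. 0)) x = deg1 (\<lambda>a b c. 0)"
  using bmul_bzero_left by (simp add: bzero_eq_deg1)

lemma bmul_deg1_zero_right: "bmul x (deg1 (\<lambda>a b c. 0)) = deg1 (\<lambda>a b c. 0)"
  using bmul_bzero_right by (simp add: bzero_eq_deg1)

lemma bR1_eq_deg1: "bR1 = deg1 (\<lambda>a b c. if a = E \<and> b = RR1 \<and> c = E then 1 else 0)"
  by (rule ext) (auto simp: bR1_def bbasis_def deg1_def split: list.split)

lemma bR2_eq_deg1: "bR2 = deg1 (\<lambda>a b c. if a = E \<and> b = RR2 \<and> c = E then 1 else 0)"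
  by (rule ext) (auto simp: bR2_def bbasis_def deg1_def split: list.split)

lemma bmul_deg1_Cons:
  "bmul (deg1 t) y (c0, (r, c1) # rest) = (\<Sum>e\<in>{E, I, J, K}. tab_rmul e t c0 r c1 * y (e, rest))"
proof -
  let ?m = "(c0, (r, c1) # rest)"
  let ?g = "\<lambda>k. \<Sum>d\<in>{E, I, J, K}. \<Sum>e\<in>{E, I, J, K}. if snd (qmul d e) = slot ?m k
    then fst (qmul d e) * deg1 t (pre ?m k d) * y (suf ?m k e) else 0"
  have "bmul (deg1 t) y ?m = ?g 1 + sum ?g ({0..length (snd ?m)} - {1})"
    unfolding bmul_def by (subst sum.remove[of _ 1]) auto
  also have "sum ?g ({0..length (snd ?m)} - {1}) = 0"
  proof (rule sum.neutral, rule ballI)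
    fix k
    assume "k \<in> {0..length (snd ?m)} - {1}"
    then have "deg1 t (pre ?m k d) = 0" for d
      by (intro deg1_eq_0) (simp add: length_pre)
    then show "?g k = 0"
      by simp
  qed
  also have "?g 1 = (\<Sum>d\<in>{E, I, J, K}. \<Sum>e\<in>{E, I, J, K}.
      if snd (qmul d e) = c1 then fst (qmul d e) * t c0 r d * y (e, rest) else 0)"
    by (simp add: slot_def pre_def suf_def deg1_def)
  also have "\<dots> = (\<Sum>e\<in>{E, I, J, K}. tab_rmul e t c0 r c1 * y (e, rest))"
    unfolding tab_rmul_def sum_distrib_right by (subst sum.swap) (simp add: if_distrib mult.commute)
  finally show ?thesis
    by simp
qed

lemma bmul_Nil:
  "bmul x y (c0, []) = (\<Sum>d\<in>{E, I, J, K}. \<Sum>e\<in>{E, I, J, K}.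
      if snd (qmul d e) = c0 then fst (qmul d e) * x (d, []) * y (e, []) else 0)"
  unfolding bmul_def by (simp only: snd_conv list.size atLeastAtMost_singleton)
    (simp add: pre_def slot_def suf_def)

lemma bmul_deg1_Nil: "bmul (deg1 t) y (c0, []) = 0"
  by (simp add: bmul_Nil deg1_def)

section \<open>The split variables\<close>

text \<open>The table \<open>conj_avg q s \<chi>\<close> holds the coefficients of
  \<open>1/4 \<Sum>\<^sub>g \<chi>(g) g\<^sup>-\<^sup>1 R\<^sub>s q\<^sup>-\<^sup>1 g\<close>, \<open>g\<close> ranging over the basis \<open>1, Q\<^sub>1, Q\<^sub>2, Q\<^sub>1Q\<^sub>2\<close>
  (note \<open>g\<^sup>-\<^sup>1 = inv_sign g \<cdot> g\<close> and \<open>q\<^sup>-\<^sup>1 = -q\<close>). Composing the projections \<open>(_)\<^sup>i\<^sub>Q\<close> is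
  such an average, with the character \<open>qchar i1 i2\<close> of the Klein four-group of the basis.\<close>

definition inv_sign :: "qb \<Rightarrow> real" where
  "inv_sign c = (if c = E then 1 else -1)"

definition qchar :: "nat \<Rightarrow> nat \<Rightarrow> qb \<Rightarrow> real" where
  "qchar i1 i2 c = (case c of E \<Rightarrow> 1 | I \<Rightarrow> (-1) ^ i1 | J \<Rightarrow> (-1) ^ i2 | K \<Rightarrow> (-1) ^ (i1 + i2))"

definition conj_avg :: "qb \<Rightarrow> rlet \<Rightarrow> (qb \<Rightarrow> real) \<Rightarrow> qb \<Rightarrow> rlet \<Rightarrow> qb \<Rightarrow> real" where
  "conj_avg q s \<chi> c0 r c1 =
     (if r = s \<and> c1 = snd (qmul q c0) then - \<chi> c0 * inv_sign c0 * fst (qmul q c0) / 4 else 0)"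

definition split_table :: "nat \<Rightarrow> qb \<Rightarrow> rlet \<Rightarrow> qb \<Rightarrow> real" where
  "split_table k =
     (let i1 = ((k - 1) mod 4) div 2; i2 = (k - 1) mod 2
      in if k \<le> 4 then conj_avg I RR1 (qchar i1 i2) else conj_avg J RR2 (qchar i1 i2))"

text \<open>The \<open>t\<close>-part of the split variables after the rotation: differentiating \<open>R\<^sub>j Q\<^sub>j\<^sup>-\<^sup>1\<close> gives
  the two terms, and differentiating the conjugations swaps the character.\<close>

definition split_tpart :: "nat \<Rightarrow> qb \<Rightarrow> rlet \<Rightarrow> qb \<Rightarrow> real" where
  "split_tpart k =
     (let i1 = ((k - 1) mod 4) div 2; i2 = (k - 1) mod 2
      in if k \<le> 4
         then (\<lambda>a r b. conj_avg I RR2 (qchar i1 i2) a r b + conj_avg J RR1 (qchar i2 i1) a r b)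
         else (\<lambda>a r b. - conj_avg J RR1 (qchar i1 i2) a r b - conj_avg I RR2 (qchar i2 i1) a r b))"

lemmas splitvar_simps = splitvar_def qpart_def dmul_def dneg_def dscale_def dadd_def dsub_def Let_def
  bmul_deg1_zero_left bmul_deg1_zero_right bmul_bscale_left bmul_bscale_right bmul_bbasis_left
  bmul_bbasis_right bQ1_def bQ2_def lmul_basis_deg1 rmul_basis_deg1 badd_deg1 bscale_deg1 bzero_eq_deg1 bR1_eq_deg1 bR2_eq_deg1

lemmas split_table_simps = tab_lmul_eq tab_rmul_eq split_table_def split_tpart_def conj_avg_def
  qchar_def inv_sign_def

lemma splitvar_std:
  assumes "k \<in> {1..8}"
  shows "splitvar (bQ1, bzero) (bQ2, bzero) (bR1, bzero) (bR2, bzero) k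
    = (deg1 (split_table k), bzero)"
  using nat_1_8_cases[OF assms]
  by (elim disjE; simp add: splitvar_simps del: One_nat_def; intro conjI deg1_cong;
      rename_tac a b c; case_tac a; case_tac b; case_tac c; simp add: split_table_simps)

lemma splitvar_rot:
  assumes "k \<in> {1..8}"
  shows "splitvar (bQ1, bQ2) (bQ2, bscale (-1) bQ1) (bR1, bR2) (bR2, bscale (-1) bR1) k
    = (deg1 (split_table k), deg1 (split_tpart k))"
  using nat_1_8_cases[OF assms]
  by (elim disjE; simp add: splitvar_simps del: One_nat_def; intro conjI deg1_cong;
      rename_tac a b c; case_tac a; case_tac b; case_tac c; simp add: split_table_simps)

lemma Q1D_eq: "Q1D = (bQ1, bzero)"
  by (simp add: Q1D_def demb_def)

lemma Q2D_eq: "Q2D = (bQ2, bzero)"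
  by (simp add: Q2D_def demb_def)

lemma dsub_A1D_Q1D: "dsub A1D Q1D = (bR1, bzero)"
  by (simp add: dsub_def dadd_def dneg_def dscale_def Q1D_def A1D_def demb_def badd_def bzero_def bscale_def)

lemma dsub_A2D_Q2D: "dsub A2D Q2D = (bR2, bzero)"
  by (simp add: dsub_def dadd_def dneg_def dscale_def Q2D_def A2D_def demb_def badd_def bzero_def bscale_def)

lemma fst_Rot_Q: "fst (Rot (Q1D, Q2D)) = (bQ1, bQ2)"
  by (simp add: Rot_def dadd_def dmul_def tt_def Q1D_def Q2D_def demb_def bmul_bzero_left
      bmul_bzero_right bmul_bone_left) (simp add: badd_def bzero_def)

lemma snd_Rot_Q: "snd (Rot (Q1D, Q2D)) = (bQ2, bscale (-1) bQ1)"
  by (simp add: Rot_def dadd_def dsub_def dneg_def dscale_def dmul_def tt_def Q1D_def Q2D_def demb_def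
      bmul_bzero_left bmul_bzero_right bmul_bone_left) (simp add: badd_def bzero_def bscale_def)

lemma dsub_fst_Rot: "dsub (fst (Rot (A1D, A2D))) (fst (Rot (Q1D, Q2D))) = (bR1, bR2)"
  by (simp add: Rot_def dadd_def dsub_def dneg_def dscale_def dmul_def tt_def Q1D_def Q2D_def A1D_def
      A2D_def demb_def bmul_bzero_left bmul_bzero_right bmul_bone_left)
    (simp add: badd_def bzero_def bscale_def)

lemma dsub_snd_Rot: "dsub (snd (Rot (A1D, A2D))) (snd (Rot (Q1D, Q2D))) = (bR2, bscale (-1) bR1)"
  by (simp add: Rot_def dadd_def dsub_def dneg_def dscale_def dmul_def tt_def Q1D_def Q2D_def A1D_def
      A2D_def demb_def bmul_bzero_left bmul_bzero_right bmul_bone_left)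
    (simp add: badd_def bzero_def bscale_def)

definition split_vars_std :: "nat \<Rightarrow> del" where
  "split_vars_std = splitvar (bQ1, bzero) (bQ2, bzero) (bR1, bzero) (bR2, bzero)"

definition split_vars_rot :: "nat \<Rightarrow> del" where
  "split_vars_rot = splitvar (bQ1, bQ2) (bQ2, bscale (-1) bQ1) (bR1, bR2) (bR2, bscale (-1) bR1)"

lemma splitvar_at_std: "splitvar Q1D Q2D (dsub A1D Q1D) (dsub A2D Q2D) = split_vars_std"
  unfolding dsub_A1D_Q1D dsub_A2D_Q2D unfolding Q1D_eq Q2D_eq split_vars_std_def ..

lemma splitvar_at_rot:
  "splitvar (fst (Rot (Q1D, Q2D))) (snd (Rot (Q1D, Q2D)))
     (dsub (fst (Rot (A1D, A2D))) (fst (Rot (Q1D, Q2D))))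
     (dsub (snd (Rot (A1D, A2D))) (snd (Rot (Q1D, Q2D)))) = split_vars_rot"
  unfolding dsub_fst_Rot dsub_snd_Rot unfolding fst_Rot_Q snd_Rot_Q split_vars_rot_def ..

lemma OI_scalar_iff: "OI_scalar f \<longleftrightarrow> deval f split_vars_std = deval f split_vars_rot"
  unfolding OI_scalar_def scal_eval_def splitvar_at_std splitvar_at_rot ..

lemma OI_pseudo_iff:
  "OI_pseudo f \<longleftrightarrow> dmul (deval f split_vars_std) (dmul (bQ1, bzero) (bQ2, bzero))
     = dmul (deval f split_vars_rot) (dmul (bQ1, bQ2) (bQ2, bscale (-1) bQ1))"
  unfolding OI_pseudo_def pseudo_eval_def splitvar_at_std splitvar_at_rot
  unfolding fst_Rot_Q snd_Rot_Q unfolding Q1D_eq Q2D_eq ..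

lemma OI_vect_iff:
  "OI_vect f1 f2 \<longleftrightarrow>
     Rot (dmul (deval f1 split_vars_std) (bQ1, bzero), dmul (deval f2 split_vars_std) (bQ2, bzero))
     = (dmul (deval f1 split_vars_rot) (bQ1, bQ2), dmul (deval f2 split_vars_rot) (bQ2, bscale (-1) bQ1))"
  unfolding OI_vect_def vect_eval_def splitvar_at_std splitvar_at_rot
  unfolding fst_Rot_Q snd_Rot_Q unfolding Q1D_eq Q2D_eq ..

lemma split_vars_std_tfree: "k \<in> {1..8} \<Longrightarrow> fst (split_vars_std k) = deg1 (split_table k)"
  by (simp add: split_vars_std_def splitvar_std)

lemma split_vars_std_tpart: "k \<in> {1..8} \<Longrightarrow> snd (split_vars_std k) = bzero"
  by (simp add: split_vars_std_def splitvar_std)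

lemma split_vars_rot_tfree: "k \<in> {1..8} \<Longrightarrow> fst (split_vars_rot k) = deg1 (split_table k)"
  by (simp add: split_vars_rot_def splitvar_rot)

lemma split_vars_rot_tpart: "k \<in> {1..8} \<Longrightarrow> snd (split_vars_rot k) = deg1 (split_tpart k)"
  by (simp add: split_vars_rot_def splitvar_rot)

lemma bmul_bQ1_bQ2: "bmul bQ1 bQ2 = bbasis (K, [])"
  by (simp add: bQ1_def bQ2_def bmul_bbasis_right rmul_basis_bbasis) (simp add: bscale_def)

lemma dmul_Clifford_std: "dmul (bQ1, bzero) (bQ2, bzero) = (bbasis (K, []), bzero)"
  by (simp add: dmul_def bmul_bQ1_bQ2 bmul_bzero_left bmul_bzero_right) (simp add: badd_def bzero_def)

lemma dmul_Clifford_rot: "dmul (bQ1, bQ2) (bQ2, bscale (-1) bQ1) = (bbasis (K, []), bzero)"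
proof -
  have "badd (bmul bQ1 (bscale (-1) bQ1)) (bmul bQ2 bQ2) = bzero"
    by (simp add: bQ1_def bQ2_def bmul_bscale_right bmul_bbasis_right rmul_basis_bbasis)
      (simp add: fun_eq_iff badd_def bscale_def bzero_def bbasis_def)
  then show ?thesis
    by (simp add: dmul_def bmul_bQ1_bQ2)
qed

section \<open>Circular-basis coefficients\<close>

text \<open>\<open>dual_pair l\<close> pairs a coefficient table with \<open>4 (r\<^sub>2 \<mp> r\<^sub>7)\<close>. The split-variable tables
  are orthogonal of squared norm \<open>1/4\<close>, so this functional takes the value \<open>Mtil k l\<close> on \<open>r\<^sub>k\<close>:
  it reads off the \<open>rtilde\<^sub>l\<close>-coordinate (\<open>l = 1, 2\<close>), and \<open>peel l\<close> strips a leading factor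
  \<open>rtilde\<^sub>l\<close>.\<close>

definition dual_pair :: "nat \<Rightarrow> (qb \<Rightarrow> rlet \<Rightarrow> qb \<Rightarrow> real) \<Rightarrow> real" where
  "dual_pair l t = - t E RR1 I - t I RR1 E - t J RR1 K + t K RR1 J
      + (if l = 1 then 1 else -1) * (t E RR2 J - t I RR2 K + t J RR2 E + t K RR2 I)"

definition peel :: "nat \<Rightarrow> bel \<Rightarrow> bel" where
  "peel l x m = dual_pair l (\<lambda>c0 r c. fst (qmul c (fst m)) * x (c0, (r, snd (qmul c (fst m))) # snd m))"

definition peel_coeff :: "nat \<Rightarrow> (qb \<Rightarrow> rlet \<Rightarrow> qb \<Rightarrow> real) \<Rightarrow> qb \<Rightarrow> qb \<Rightarrow> real" where
  "peel_coeff l t e e' = dual_pair l (\<lambda>c0 r c. fst (qmul c e) * tab_rmul e' t c0 r (snd (qmul c e)))"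

lemma dual_pair_sum: "dual_pair l (\<lambda>a r b. \<Sum>i\<in>A. f i a r b) = (\<Sum>i\<in>A. dual_pair l (f i))"
  by (simp add: dual_pair_def sum.distrib sum_subtractf sum_negf sum_distrib_left)

lemma dual_pair_scale: "dual_pair l (\<lambda>a r b. c * f a r b) = c * dual_pair l f"
  by (simp add: dual_pair_def algebra_simps)

lemma peel_bmul_deg1:
  "peel l (bmul (deg1 t) y) (e, rest) = (\<Sum>e'\<in>{E, I, J, K}. peel_coeff l t e e' * y (e', rest))"
  by (simp add: peel_def peel_coeff_def bmul_deg1_Cons dual_pair_def sum_qb algebra_simps)

lemma peel_coeff_split_table:
  assumes "l \<in> {1, 2}" and "k \<in> {1..8}"
  shows "peel_coeff l (split_table k) e e' = (if e = e' then Mtil k l else 0)"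
  using assms(1) nat_1_8_cases[OF assms(2)]
  by (simp only: peel_coeff_def dual_pair_def insert_iff empty_iff simp_thms)
    (elim disjE; cases e; cases e'; simp add: split_table_simps Mtil_def)

lemma peel_coeff_split_tpart:
  assumes "l \<in> {1, 2}" and "k \<in> {1..8}"
  shows "peel_coeff l (split_tpart k) e e'
    = (if l = 1 then -2 * Mtil k 1 else 0) * (if snd (qmul K e') = e then fst (qmul K e') else 0)"
  using assms(1) nat_1_8_cases[OF assms(2)]
  by (simp only: peel_coeff_def dual_pair_def insert_iff empty_iff simp_thms)
    (elim disjE; cases e; cases e'; simp add: split_table_simps Mtil_def)

lemma peel_bmul_split_table:
  assumes "l \<in> {1, 2}" and "k \<in> {1..8}"
  shows "peel l (bmul (deg1 (split_table k)) y) = (\<lambda>m. Mtil k l * y m)"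
proof
  fix m :: mon
  show "peel l (bmul (deg1 (split_table k)) y) m = Mtil k l * y m"
    by (cases m; cases "fst m") (simp_all add: peel_bmul_deg1 peel_coeff_split_table[OF assms] sum_qb)
qed

lemma peel_bmul_split_tpart:
  assumes "l \<in> {1, 2}" and "k \<in> {1..8}"
  shows "peel l (bmul (deg1 (split_tpart k)) y)
    = (\<lambda>m. (if l = 1 then -2 * Mtil k 1 else 0) * lmul_basis K y m)"
proof
  fix m :: mon
  show "peel l (bmul (deg1 (split_tpart k)) y) m
    = (if l = 1 then -2 * Mtil k 1 else 0) * lmul_basis K y m"
    by (cases m; cases "fst m")
      (simp_all add: peel_bmul_deg1 peel_coeff_split_tpart[OF assms] sum_qb lmul_basis_def algebra_simps)
qed

lemma peel_lmul_basis_K: "peel l (lmul_basis K y) = (\<lambda>m. - lmul_basis K (peel l y) m)"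
proof
  fix m :: mon
  show "peel l (lmul_basis K y) m = - lmul_basis K (peel l y) m"
    by (cases m; cases "fst m") (simp_all add: peel_def lmul_basis_def dual_pair_def sum_qb algebra_simps)
qed

lemma peel_lin: "peel l (\<lambda>m. a * x m + b * y m) = (\<lambda>m. a * peel l x m + b * peel l y m)"
  by (rule ext) (simp add: peel_def dual_pair_def algebra_simps)

lemma peel_badd: "peel l (badd x y) = (\<lambda>m. peel l x m + peel l y m)"
  using peel_lin[of l 1 x 1 y] by (simp add: badd_def)

lemma peel_bone: "peel l bone = (\<lambda>m. 0)"
  by (rule ext) (simp add: peel_def dual_pair_def bone_def bbasis_def)

lemma peel_rmul_basis: "peel l (rmul_basis d x) = rmul_basis d (peel l x)"
proof
  fix m :: mon
  obtain e rest where m: "m = (e, rest)"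
    by (cases m)
  show "peel l (rmul_basis d x) m = rmul_basis d (peel l x) m"
  proof (cases "rest = []")
    case True
    show ?thesis
      unfolding m True peel_def rmul_basis_single rmul_basis_Nil fst_conv snd_conv sum_qb
      by (cases d; cases e) (simp_all add: dual_pair_def algebra_simps)
  next
    case False
    let ?a = "\<lambda>c'. if snd (qmul c' d) = slot (e, rest) (length rest) then fst (qmul c' d) else 0"
    let ?s = "\<lambda>c'. snd (pre (e, rest) (length rest) c')"
    have "peel l (rmul_basis d x) m = dual_pair l (\<lambda>c0 r c. \<Sum>c'\<in>{E, I, J, K}.
        ?a c' * (fst (qmul c e) * x (c0, (r, snd (qmul c e)) # ?s c')))"
      unfolding m peel_def fst_conv snd_conv rmul_basis_Cons[OF False, of _ _ _ _ e]
      by (simp only: sum_distrib_left mult.left_commute)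
    also have "\<dots> = (\<Sum>c'\<in>{E, I, J, K}. ?a c' * peel l x (e, ?s c'))"
      by (simp only: dual_pair_sum dual_pair_scale peel_def fst_conv snd_conv)
    also have "\<dots> = rmul_basis d (peel l x) m"
      unfolding m rmul_basis_nonempty[OF False] ..
    finally show ?thesis .
  qed
qed

text \<open>\<open>rt_coeff v c x\<close> is the coefficient of \<open>rtilde\<^sub>v\<^sub>1 \<cdots> rtilde\<^sub>v\<^sub>n c\<close> in \<open>x\<close>.\<close>

fun rt_coeff :: "nat list \<Rightarrow> qb \<Rightarrow> bel \<Rightarrow> real" where
  "rt_coeff [] c x = x (c, [])"
| "rt_coeff (l # v) c x = rt_coeff v c (peel l x)"

lemma rt_coeff_lin: "rt_coeff v c (\<lambda>m. a * x m + b * y m) = a * rt_coeff v c x + b * rt_coeff v c y"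
  by (induction v arbitrary: x y) (simp_all add: peel_lin)

lemma rt_coeff_scale: "rt_coeff v c (\<lambda>m. a * x m) = a * rt_coeff v c x"
  using rt_coeff_lin[of v c a x 0 x] by simp

lemma rt_coeff_zero: "rt_coeff v c (\<lambda>m. 0) = 0"
  using rt_coeff_scale[of v c 0 "\<lambda>m. 0"] by simp

lemma rt_coeff_badd: "rt_coeff v c (badd x y) = rt_coeff v c x + rt_coeff v c y"
  using rt_coeff_lin[of v c 1 x 1 y] by (simp add: badd_def)

lemma rt_coeff_bscale: "rt_coeff v c (bscale a x) = a * rt_coeff v c x"
  unfolding bscale_def by (rule rt_coeff_scale)

lemma rt_coeff_bzero: "rt_coeff v c bzero = 0"
  unfolding bzero_def by (rule rt_coeff_zero)

lemma rt_coeff_lmul_basis_K: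
  "set v \<subseteq> {1, 2} \<Longrightarrow> rt_coeff v K (lmul_basis K y) = (-1) ^ length v * rt_coeff v E y"
proof (induction v arbitrary: y)
  case Nil
  then show ?case
    by (simp add: lmul_basis_def sum_qb)
next
  case (Cons l v)
  then have "rt_coeff (l # v) K (lmul_basis K y) = - rt_coeff v K (lmul_basis K (peel l y))"
    using rt_coeff_scale[of v K "-1"] by (simp add: peel_lmul_basis_K)
  then show ?case
    using Cons by simp
qed

lemma rt_coeff_rmul_basis:
  "rt_coeff v c (rmul_basis d x)
    = (\<Sum>c'\<in>{E, I, J, K}. if snd (qmul c' d) = c then fst (qmul c' d) * rt_coeff v c' x else 0)"
  by (induction v arbitrary: x) (simp_all add: rmul_basis_Nil peel_rmul_basis)

lemma rt_coeff_cong: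
  "(\<And>m. length (snd m) = length v \<Longrightarrow> x m = x' m) \<Longrightarrow> rt_coeff v c x = rt_coeff v c x'"
proof (induction v arbitrary: x x')
  case Nil
  then show ?case
    by simp
next
  case (Cons l v)
  have "peel l x m = peel l x' m" if "length (snd m) = length v" for m
    unfolding peel_def using Cons.prems that by simp
  then show ?case
    by (simp only: rt_coeff.simps) (rule Cons.IH)
qed

lemma rt_coeff_sum:
  "finite A \<Longrightarrow> rt_coeff v c (\<lambda>m. \<Sum>w\<in>A. f w * g w m) = (\<Sum>w\<in>A. f w * rt_coeff v c (g w))"
proof (induction A rule: finite_induct)
  case empty
  then show ?case
    by (simp add: rt_coeff_zero)
next
  case (insert a A)
  then show ?case
    using rt_coeff_lin[of v c "f a" "g a" 1 "\<lambda>m. \<Sum>w\<in>A. f w * g w m"] by simp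
qed

lemma finite_words: "finite (words N)"
  unfolding words_def by (rule finite_lists_length_le) simp

text \<open>Only words of length \<open>|v|\<close> contribute, so the truncation in \<^const>\<open>deval\<close> is harmless.\<close>

lemma rt_coeff_deval_sum:
  "rt_coeff v c (\<lambda>m. \<Sum>w\<in>words (length (snd m) + 1). f w * g w m)
    = (\<Sum>w\<in>words (length v + 1). f w * rt_coeff v c (g w))"
proof -
  have "rt_coeff v c (\<lambda>m. \<Sum>w\<in>words (length (snd m) + 1). f w * g w m)
      = rt_coeff v c (\<lambda>m. \<Sum>w\<in>words (length v + 1). f w * g w m)"
    by (rule rt_coeff_cong) simp
  then show ?thesis
    by (simp add: rt_coeff_sum finite_words)
qed

fun Mtil_word :: "nat list \<Rightarrow> nat list \<Rightarrow> real" where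
  "Mtil_word [] [] = 1"
| "Mtil_word (k # w) (l # v) = Mtil k l * Mtil_word w v"
| "Mtil_word [] (l # v) = 0"
| "Mtil_word (k # w) [] = 0"

lemma Mtil_word_eq_0: "length w \<noteq> length v \<Longrightarrow> Mtil_word w v = 0"
  by (induction w v rule: Mtil_word.induct) auto

lemma Mtil_word_eq_prod: "length w = length v \<Longrightarrow> Mtil_word w v = (\<Prod>j<length v. Mtil (w ! j) (v ! j))"
  by (induction w v rule: Mtil_word.induct) (simp_all add: prod.lessThan_Suc_shift del: prod.lessThan_Suc)

lemma sum_Mtil_word_eq_ptilde: "(\<Sum>w\<in>words (length v + 1). f w * Mtil_word w v) = ptilde f v"
proof -
  let ?S = "{w. set w \<subseteq> {1..8} \<and> length w = length v}"
  have "(\<Sum>w\<in>words (length v + 1). f w * Mtil_word w v) = (\<Sum>w\<in>?S. f w * Mtil_word w v)"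
    by (rule sum.mono_neutral_right[OF finite_words]) (auto simp: words_def Mtil_word_eq_0)
  also have "\<dots> = ptilde f v"
    unfolding ptilde_def by (rule sum.cong) (auto simp: Mtil_word_eq_prod)
  finally show ?thesis .
qed

fun charge :: "nat list \<Rightarrow> int" where
  "charge [] = 0"
| "charge (l # v) = (if l = 1 then (-1) ^ length v else 0) + charge v"

lemma rt_coeff_dprod:
  assumes tfree: "\<And>k. k \<in> {1..8} \<Longrightarrow> fst (xs k) = deg1 (split_table k)"
  shows "set w \<subseteq> {1..8} \<Longrightarrow> set v \<subseteq> {1, 2} \<Longrightarrow> rt_coeff v E (fst (dprod xs w)) = Mtil_word w v"
proof (induction w arbitrary: v)
  case Nil
  then show ?case
    by (cases v) (simp add: dunit_def bone_def bbasis_def, simp add: dunit_def peel_bone rt_coeff_zero)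
next
  case (Cons k w)
  then have k: "k \<in> {1..8}" and w: "set w \<subseteq> {1..8}"
    by auto
  have prod: "fst (dmul (xs k) (dprod xs w)) = bmul (deg1 (split_table k)) (fst (dprod xs w))"
    by (simp add: dmul_def tfree[OF k])
  show ?case
  proof (cases v)
    case Nil
    then show ?thesis
      by (simp add: prod bmul_deg1_Nil)
  next
    case (Cons l v')
    with Cons.prems have l: "l \<in> {1, 2}" and v': "set v' \<subseteq> {1, 2}"
      by auto
    with Cons show ?thesis
      by (simp add: prod peel_bmul_split_table[OF l k] rt_coeff_scale Cons.IH[OF w v'])
  qed
qed

text \<open>By the product rule each factor of a product of split variables may contribute its
  \<open>t\<close>-part; for \<open>rtilde\<^sub>1\<close> this is \<open>-2 rtilde\<^sub>1 Q\<^sub>1Q\<^sub>2\<close>, and moving \<open>Q\<^sub>1Q\<^sub>2\<close> to the end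
  costs the sign that makes up \<^const>\<open>charge\<close>.\<close>

lemma rt_coeff_dprod_tpart:
  assumes tfree: "\<And>k. k \<in> {1..8} \<Longrightarrow> fst (xs k) = deg1 (split_table k)"
    and tpart: "\<And>k. k \<in> {1..8} \<Longrightarrow> snd (xs k) = deg1 (split_tpart k)"
  shows "set w \<subseteq> {1..8} \<Longrightarrow> set v \<subseteq> {1, 2}
    \<Longrightarrow> rt_coeff v K (snd (dprod xs w)) = -2 * charge v * Mtil_word w v"
proof (induction w arbitrary: v)
  case Nil
  then show ?case
    by (cases v) (simp_all add: dunit_def rt_coeff_bzero)
next
  case (Cons k w)
  then have k: "k \<in> {1..8}" and w: "set w \<subseteq> {1..8}"
    by auto
  have prod: "snd (dmul (xs k) (dprod xs w)) = badd (bmul (deg1 (split_table k)) (snd (dprod xs w)))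
      (bmul (deg1 (split_tpart k)) (fst (dprod xs w)))"
    by (simp add: dmul_def tfree[OF k] tpart[OF k])
  show ?case
  proof (cases v)
    case Nil
    then show ?thesis
      by (simp add: prod bmul_deg1_Nil badd_def)
  next
    case (Cons l v')
    with Cons.prems have l: "l \<in> {1, 2}" and v': "set v' \<subseteq> {1, 2}"
      by auto
    have "rt_coeff v K (snd (dprod xs (k # w)))
        = rt_coeff v' K (\<lambda>m. Mtil k l * snd (dprod xs w) m
            + (if l = 1 then -2 * Mtil k 1 else 0) * lmul_basis K (fst (dprod xs w)) m)"
      by (simp add: Cons prod peel_badd peel_bmul_split_table[OF l k] peel_bmul_split_tpart[OF l k])
    also have "\<dots> = Mtil k l * (-2 * charge v' * Mtil_word w v')
        + (if l = 1 then -2 * Mtil k 1 else 0) * ((-1) ^ length v' * Mtil_word w v')"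
      by (simp only: rt_coeff_lin rt_coeff_lmul_basis_K[OF v'] Cons.IH[OF w v']
          rt_coeff_dprod[OF tfree w v'])
    also have "\<dots> = -2 * charge v * Mtil_word (k # w) v"
      using Cons by (cases "l = 1") (simp_all add: algebra_simps)
    finally show ?thesis .
  qed
qed

lemma rt_coeff_deval:
  assumes tfree: "\<And>k. k \<in> {1..8} \<Longrightarrow> fst (xs k) = deg1 (split_table k)" and v: "set v \<subseteq> {1, 2}"
  shows "rt_coeff v E (fst (deval f xs)) = ptilde f v"
proof -
  have "rt_coeff v E (fst (deval f xs)) = (\<Sum>w\<in>words (length v + 1). f w * Mtil_word w v)"
    unfolding deval_def fst_conv rt_coeff_deval_sum
  proof (rule sum.cong[OF refl])
    fix w
    assume "w \<in> words (length v + 1)"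
    then have "set w \<subseteq> {1..8}"
      by (simp add: words_def)
    then show "f w * rt_coeff v E (fst (dprod xs w)) = f w * Mtil_word w v"
      using rt_coeff_dprod[OF tfree _ v] by simp
  qed
  then show ?thesis
    by (simp only: sum_Mtil_word_eq_ptilde)
qed

lemma rt_coeff_deval_tpart:
  assumes tfree: "\<And>k. k \<in> {1..8} \<Longrightarrow> fst (xs k) = deg1 (split_table k)"
    and tpart: "\<And>k. k \<in> {1..8} \<Longrightarrow> snd (xs k) = deg1 (split_tpart k)"
    and v: "set v \<subseteq> {1, 2}"
  shows "rt_coeff v K (snd (deval f xs)) = -2 * charge v * ptilde f v"
proof -
  have "rt_coeff v K (snd (deval f xs))
      = (\<Sum>w\<in>words (length v + 1). -2 * charge v * (f w * Mtil_word w v))"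
    unfolding deval_def snd_conv rt_coeff_deval_sum
  proof (rule sum.cong[OF refl])
    fix w
    assume "w \<in> words (length v + 1)"
    then have "set w \<subseteq> {1..8}"
      by (simp add: words_def)
    then show "f w * rt_coeff v K (snd (dprod xs w)) = -2 * charge v * (f w * Mtil_word w v)"
      using rt_coeff_dprod_tpart[OF tfree tpart _ v] by simp
  qed
  then show ?thesis
    by (simp only: sum_distrib_left[symmetric] sum_Mtil_word_eq_ptilde)
qed

lemma deval_tpart_eq_bzero:
  assumes "\<And>k. k \<in> {1..8} \<Longrightarrow> snd (xs k) = bzero"
  shows "snd (deval f xs) = bzero"
proof -
  have "snd (dprod xs w) = bzero" if "set w \<subseteq> {1..8}" for w
    using that
  proof (induction w)
    case Nil
    then show ?case
      by (simp add: dunit_def)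
  next
    case (Cons k w)
    then show ?case
      by (simp add: dmul_def assms bmul_bzero_left bmul_bzero_right) (simp add: badd_def bzero_def)
  qed
  then show ?thesis
    by (auto simp: deval_def words_def bzero_def)
qed

lemma deval_std_tpart: "snd (deval f split_vars_std) = bzero"
  by (rule deval_tpart_eq_bzero) (rule split_vars_std_tpart)

section \<open>The charge of a reduced word\<close>

lemma charge_append_double: "charge (u @ a # a # x) = charge (u @ x)"
  by (induction u) (simp_all add: minus_one_power_iff)

lemma redstep_charge: "redstep w w' \<Longrightarrow> charge w' = charge w"
  by (induction rule: redstep.induct) (simp add: charge_append_double)

lemma redstep_set: "redstep w w' \<Longrightarrow> set w' \<subseteq> set w"
  by (induction rule: redstep.induct) auto

lemma rtranclp_redstep_charge: "redstep\<^sup>*\<^sup>* w w' \<Longrightarrow> charge w' = charge w"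
  by (induction rule: rtranclp_induct) (auto dest: redstep_charge)

lemma rtranclp_redstep_set: "redstep\<^sup>*\<^sup>* w w' \<Longrightarrow> set w' \<subseteq> set w"
  by (induction rule: rtranclp_induct) (auto dest: redstep_set)

lemma red_spec: "redstep\<^sup>*\<^sup>* w (red w) \<and> (\<forall>u. redstep\<^sup>*\<^sup>* w u \<longrightarrow> length (red w) \<le> length u)"
proof -
  have "\<exists>v. redstep\<^sup>*\<^sup>* w v \<and> (\<forall>u. redstep\<^sup>*\<^sup>* w u \<longrightarrow> length v \<le> length u)"
    by (rule ex_has_least_nat[of "\<lambda>v. redstep\<^sup>*\<^sup>* w v" w length]) simp
  then show ?thesis
    unfolding red_def by (rule someI_ex)
qed

lemma not_distinct_adj_split: "\<not> distinct_adj v \<Longrightarrow> \<exists>u a x. v = u @ [a, a] @ x"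
proof (induction v)
  case Nil
  then show ?case
    by simp
next
  case (Cons b v)
  show ?case
  proof (cases "v \<noteq> [] \<and> b = hd v")
    case True
    then show ?thesis
      by (intro exI[of _ "[]"] exI[of _ b] exI[of _ "tl v"]) simp
  next
    case False
    with Cons.prems obtain u a x where "v = u @ [a, a] @ x"
      using Cons.IH by (auto simp: distinct_adj_Cons)
    then show ?thesis
      by (intro exI[of _ "b # u"]) simp
  qed
qed

lemma distinct_adj_red:
  assumes "set w \<subseteq> {1, 2}"
  shows "distinct_adj (red w)"
proof (rule ccontr)
  assume "\<not> distinct_adj (red w)"
  then obtain u a x where split: "red w = u @ [a, a] @ x"
    using not_distinct_adj_split by blast
  have "set (red w) \<subseteq> {1, 2}"
    using rtranclp_redstep_set red_spec assms by blast
  with split have "a \<in> {1, 2}"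
    by auto
  then have "redstep (red w) (u @ x)"
    unfolding split by (rule redstep.intros)
  then have "redstep\<^sup>*\<^sup>* w (u @ x)"
    using red_spec by (meson rtranclp.rtrancl_into_rtrancl)
  then have "length (red w) \<le> length (u @ x)"
    using red_spec by blast
  with split show False
    by simp
qed

lemma eq_iff_neq_in_pair: "a \<in> {x, y} \<Longrightarrow> b \<in> {x, y} \<Longrightarrow> c \<in> {x, y} \<Longrightarrow> a \<noteq> b \<Longrightarrow> a = c \<longleftrightarrow> b \<noteq> c"
  by auto

lemma alternating_hd_eq_last:
  fixes v :: "nat list"
  shows "v \<noteq> [] \<Longrightarrow> set v \<subseteq> {1, 2} \<Longrightarrow> distinct_adj v \<Longrightarrow> hd v = last v \<longleftrightarrow> odd (length v)"
proof (induction v rule: list_nonempty_induct)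
  case (single x)
  then show ?case
    by simp
next
  case (cons a v)
  have "hd v \<in> set v" and "last v \<in> set v"
    using cons.hyps by simp_all
  with cons.prems have "hd v \<in> {1, 2}" and "last v \<in> {1, 2}" and "a \<in> {1, 2}"
    by auto
  have "a \<noteq> hd v"
    using cons.prems(2) cons.hyps by (simp add: distinct_adj_Cons)
  with \<open>hd v \<in> {1, 2}\<close> \<open>last v \<in> {1, 2}\<close> \<open>a \<in> {1, 2}\<close> have "a = last v \<longleftrightarrow> hd v \<noteq> last v"
    by (intro eq_iff_neq_in_pair)
  moreover have "hd v = last v \<longleftrightarrow> odd (length v)"
    using cons.prems cons.hyps by (intro cons.IH) (auto simp: distinct_adj_Cons)
  ultimately show ?case
    using cons.hyps by simp
qed

lemma charge_alternating:
  "v \<noteq> [] \<Longrightarrow> set v \<subseteq> {1, 2} \<Longrightarrow> distinct_adj v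
    \<Longrightarrow> charge v = (if last v = 1 then int ((length v + 1) div 2) else - int (length v div 2))"
proof (induction v rule: list_nonempty_induct)
  case (single x)
  then show ?case
    by auto
next
  case (cons a v)
  then have IH: "charge v = (if last v = 1 then int ((length v + 1) div 2) else - int (length v div 2))"
    and parity: "hd v = last v \<longleftrightarrow> odd (length v)"
    using alternating_hd_eq_last by (auto simp: distinct_adj_Cons)
  have "hd v \<in> set v" and "last v \<in> set v"
    using cons.hyps by simp_all
  with cons.prems have "hd v \<in> {1, 2}" and "last v \<in> {1, 2}" and "a \<in> {1, 2}"
    by auto
  have "a \<noteq> hd v"
    using cons.prems(2) cons.hyps by (simp add: distinct_adj_Cons)
  with \<open>hd v \<in> {1, 2}\<close> \<open>last v \<in> {1, 2}\<close> \<open>a \<in> {1, 2}\<close> consider "a = 1" "hd v = 2" "last v = 1" | "a = 1" "hd v = 2" "last v = 2"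
    | "a = 2" "hd v = 1" "last v = 1" | "a = 2" "hd v = 1" "last v = 2"
    by auto
  then show ?case
  proof cases
    case 1
    with parity obtain n where "length v = 2 * n"
      by (auto elim: evenE)
    with 1 IH cons.hyps show ?thesis
      by simp
  next
    case 2
    with parity obtain n where "length v = 2 * n + 1"
      by (auto elim: oddE)
    with 2 IH cons.hyps show ?thesis
      by simp
  next
    case 3
    with parity obtain n where "length v = 2 * n + 1"
      by (auto elim: oddE)
    with 3 IH cons.hyps show ?thesis
      by simp
  next
    case 4
    with parity obtain n where "length v = 2 * n"
      by (auto elim: evenE)
    with 4 IH cons.hyps show ?thesis
      by simp
  qed
qed

lemma charge_red: "charge (red w) = charge w"
  using rtranclp_redstep_charge red_spec by blast

lemma charge_neq_0:
  assumes "set w \<subseteq> {1, 2}" and "red w \<notin> {[], [2]}"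
  shows "charge w \<noteq> 0"
proof
  let ?v = "red w"
  assume "charge w = 0"
  then have charge: "charge ?v = 0"
    by (simp add: charge_red)
  have set: "set ?v \<subseteq> {1, 2}"
    using rtranclp_redstep_set red_spec assms(1) by blast
  have ne: "?v \<noteq> []"
    using assms(2) by auto
  note formula = charge_alternating[OF ne set distinct_adj_red[OF assms(1)]]
  show False
  proof (cases "last ?v = 1")
    case True
    with charge formula ne show False
      by (cases ?v) auto
  next
    case False
    with charge formula have "length ?v < 2"
      by simp
    with ne obtain a where a: "?v = [a]"
      by (cases ?v; cases "tl ?v") auto
    with False set have "a = 2"
      by auto
    with a assms(2) show False
      by simp
  qed
qed

lemma charge_neq_1:
  assumes "set w \<subseteq> {1, 2}" and "red w \<notin> {[], [2]}" and "red w \<notin> {[1], [2, 1]}"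
  shows "charge w \<noteq> 1"
proof
  let ?v = "red w"
  assume "charge w = 1"
  then have charge: "charge ?v = 1"
    by (simp add: charge_red)
  have set: "set ?v \<subseteq> {1, 2}"
    using rtranclp_redstep_set red_spec assms(1) by blast
  have ne: "?v \<noteq> []"
    using assms(2) by auto
  have alt: "distinct_adj ?v"
    using distinct_adj_red[OF assms(1)] .
  note formula = charge_alternating[OF ne set alt]
  show False
  proof (cases "last ?v = 1")
    case False
    with charge formula show False
      by simp
  next
    case True
    with charge formula have "length ?v = 1 \<or> length ?v = 2"
      by auto
    then show False
    proof
      assume "length ?v = 1"
      then obtain a where "?v = [a]"
        by (cases ?v) auto
      with True assms(3) show False
        by simp
    next
      assume "length ?v = 2"
      then obtain a b where ab: "?v = [a, b]"
        by (cases ?v; cases "tl ?v") auto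
      with True alt have "b = 1" and "a \<noteq> b"
        by auto
      with ab set have "a = 2"
        by auto
      with ab \<open>b = 1\<close> assms(3) show False
        by simp
    qed
  qed
qed

lemma OI_scalar_charge:
  assumes "OI_scalar f" and v: "set v \<subseteq> {1, 2}"
  shows "charge v * ptilde f v = 0"
proof -
  have "0 = rt_coeff v K (snd (deval f split_vars_std))"
    by (simp add: deval_std_tpart rt_coeff_bzero)
  also have "\<dots> = rt_coeff v K (snd (deval f split_vars_rot))"
    using assms(1) by (simp add: OI_scalar_iff)
  also have "\<dots> = -2 * charge v * ptilde f v"
    by (rule rt_coeff_deval_tpart[OF split_vars_rot_tfree split_vars_rot_tpart v])
  finally show ?thesis
    by simp
qed

lemma OI_pseudo_charge:
  assumes "OI_pseudo f" and v: "set v \<subseteq> {1, 2}"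
  shows "charge v * ptilde f v = 0"
proof -
  have tpart: "snd (dmul D (bbasis (K, []), bzero)) = rmul_basis K (snd D)" for D :: del
    by (simp add: dmul_def bmul_bzero_right bmul_bbasis_right) (simp add: badd_def bzero_def)
  have "0 = rt_coeff v E (rmul_basis K (snd (deval f split_vars_std)))"
    by (simp add: deval_std_tpart rt_coeff_rmul_basis rt_coeff_bzero)
  also have "\<dots> = rt_coeff v E (rmul_basis K (snd (deval f split_vars_rot)))"
    using assms(1) unfolding OI_pseudo_iff dmul_Clifford_std dmul_Clifford_rot tpart[symmetric]
    by simp
  also have "\<dots> = - rt_coeff v K (snd (deval f split_vars_rot))"
    by (simp add: rt_coeff_rmul_basis sum_qb)
  also have "\<dots> = 2 * charge v * ptilde f v"
    using rt_coeff_deval_tpart[OF split_vars_rot_tfree split_vars_rot_tpart v] by simp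
  finally show ?thesis
    by simp
qed

lemma OI_vect_charge:
  assumes "OI_vect f1 f2" and v: "set v \<subseteq> {1, 2}"
  shows "ptilde f2 v = ptilde f1 v - 2 * charge v * ptilde f1 v"
    and "ptilde f1 v = ptilde f2 v - 2 * charge v * ptilde f2 v"
proof -
  let ?std = "\<lambda>f. deval f split_vars_std" and ?rot = "\<lambda>f. deval f split_vars_rot"
  have eq: "Rot (dmul (?std f1) (bQ1, bzero), dmul (?std f2) (bQ2, bzero))
      = (dmul (?rot f1) (bQ1, bQ2), dmul (?rot f2) (bQ2, bscale (-1) bQ1))"
    using assms(1) by (simp add: OI_vect_iff)
  have std_f: "rt_coeff v E (fst (?std f)) = ptilde f v" for f
    by (rule rt_coeff_deval[OF split_vars_std_tfree v])
  have rot_f: "rt_coeff v E (fst (?rot f)) = ptilde f v" for f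
    by (rule rt_coeff_deval[OF split_vars_rot_tfree v])
  have rot_t: "rt_coeff v K (snd (?rot f)) = -2 * charge v * ptilde f v" for f
    by (rule rt_coeff_deval_tpart[OF split_vars_rot_tfree split_vars_rot_tpart v])
  have "rt_coeff v J (snd (fst (Rot (dmul (?std f1) (bQ1, bzero), dmul (?std f2) (bQ2, bzero)))))
      = rt_coeff v J (snd (dmul (?rot f1) (bQ1, bQ2)))"
    using eq by simp
  then show "ptilde f2 v = ptilde f1 v - 2 * charge v * ptilde f1 v"
    by (simp add: Rot_def dadd_def dmul_def tt_def deval_std_tpart std_f rot_f rot_t bQ1_def bQ2_def
        bmul_bbasis_right bmul_bzero_left bmul_bzero_right bmul_bone_left rt_coeff_badd
        rt_coeff_bzero rt_coeff_rmul_basis sum_qb)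
  have "rt_coeff v I (snd (snd (Rot (dmul (?std f1) (bQ1, bzero), dmul (?std f2) (bQ2, bzero)))))
      = rt_coeff v I (snd (dmul (?rot f2) (bQ2, bscale (-1) bQ1)))"
    using eq by simp
  then show "ptilde f1 v = ptilde f2 v - 2 * charge v * ptilde f2 v"
    by (simp add: Rot_def dadd_def dsub_def dneg_def dscale_def dmul_def tt_def deval_std_tpart std_f rot_f rot_t
        bQ1_def bQ2_def bmul_bscale_right bmul_bbasis_right bmul_bzero_left bmul_bzero_right
        bmul_bone_left rt_coeff_badd rt_coeff_bscale rt_coeff_bzero rt_coeff_rmul_basis sum_qb)
qed

theorem mainTheorem2:
  fixes f0 f1 f2 f12 :: series and \<iota> :: "nat list"
  assumes "set \<iota> \<subseteq> {1, 2}"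
    and "red \<iota> \<notin> {[], [2]}"
  shows "(OI_scalar f0 \<longrightarrow> ptilde f0 \<iota> = 0)
       \<and> (OI_pseudo f12 \<longrightarrow> ptilde f12 \<iota> = 0)
       \<and> (OI_vect f1 f2 \<and> red \<iota> \<notin> {[1], [2, 1]} \<longrightarrow> ptilde f1 \<iota> = 0 \<and> ptilde f2 \<iota> = 0)"
proof (intro conjI impI)
  have c0: "charge \<iota> \<noteq> 0"
    using charge_neq_0[OF assms] .
  show "ptilde f0 \<iota> = 0" if "OI_scalar f0"
    using OI_scalar_charge[OF that assms(1)] c0 by simp
  show "ptilde f12 \<iota> = 0" if "OI_pseudo f12"
    using OI_pseudo_charge[OF that assms(1)] c0 by simp
  assume vect: "OI_vect f1 f2 \<and> red \<iota> \<notin> {[1], [2, 1]}"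
  have c1: "charge \<iota> \<noteq> 1"
    using charge_neq_1[OF assms] vect by blast
  define c :: real where "c = charge \<iota>"
  have e1: "ptilde f2 \<iota> = (1 - 2 * c) * ptilde f1 \<iota>"
    using OI_vect_charge(1)[OF conjunct1[OF vect] assms(1)] by (simp add: c_def algebra_simps)
  have e2: "ptilde f1 \<iota> = (1 - 2 * c) * ptilde f2 \<iota>"
    using OI_vect_charge(2)[OF conjunct1[OF vect] assms(1)] by (simp add: c_def algebra_simps)
  have "c * (1 - c) * ptilde f1 \<iota> = 0"
    using e1 e2 by algebra
  moreover have "c * (1 - c) \<noteq> 0"
    using c0 c1 by (simp add: c_def)
  ultimately show "ptilde f1 \<iota> = 0"
    by simp
  with e1 show "ptilde f2 \<iota> = 0"
    by simp
qed

end
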